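(* The identity functor of $\mathrm{Gaunt}_n$ has exactly one natural endo-transformation, namely the identity transformation: if $\eta\colon\mathrm{id}\Rightarrow\mathrm{id}$ is a natural transformation of endofunctors of $\mathrm{Gaunt}_n$, then $\eta_X=\mathrm{id}_X$ for every gaunt $n$-category $X$.
   Context: A strict $0$-category is a set; a strict $n$-category is a category enriched in strict $(n-1)$-categories. A strict $n$-category is gaunt if for every $1\le k\le n$ its only invertible $k$-morphisms are identities; $\mathrm{Gaunt}_n$ is the category of small gaunt $n$-categories and strict functors. *)

theory Defs
  imports Main
begin

text \<open>Single-sorted presentation of strict n-categories: a set of cells with
  k-source / k-target operators and partial k-composition for k < n
  (comp k g f is "g after f", defined when src k g = tgt k f).\<close>

record 'a ncat =
  Cells :: "'a set"
  src   :: "nat \<Rightarrow> 'a \<Rightarrow> 'a"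
  tgt   :: "nat \<Rightarrow> 'a \<Rightarrow> 'a"
  comp  :: "nat \<Rightarrow> 'a \<Rightarrow> 'a \<Rightarrow> 'a"

definition strict_ncat :: "nat \<Rightarrow> 'a ncat \<Rightarrow> bool" where
  "strict_ncat n C \<longleftrightarrow>
     (\<forall>k<n. \<forall>x\<in>Cells C. src C k x \<in> Cells C \<and> tgt C k x \<in> Cells C) \<and>
     (\<forall>k<n. \<forall>x\<in>Cells C. \<forall>y\<in>Cells C. src C k x = tgt C k y \<longrightarrow> comp C k x y \<in> Cells C) \<and>
     (\<forall>j<n. \<forall>k<n. \<forall>x\<in>Cells C.
        (k < j \<longrightarrow> src C k (src C j x) = src C k x \<and> src C k (tgt C j x) = src C k x \<and>
                    tgt C k (src C j x) = tgt C k x \<and> tgt C k (tgt C j x) = tgt C k x) \<and>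
        (j \<le> k \<longrightarrow> src C k (src C j x) = src C j x \<and> src C k (tgt C j x) = tgt C j x \<and>
                    tgt C k (src C j x) = src C j x \<and> tgt C k (tgt C j x) = tgt C j x)) \<and>
     (\<forall>k<n. \<forall>x\<in>Cells C. \<forall>y\<in>Cells C. src C k x = tgt C k y \<longrightarrow>
        src C k (comp C k x y) = src C k y \<and> tgt C k (comp C k x y) = tgt C k x) \<and>
     (\<forall>j<n. \<forall>k<n. \<forall>x\<in>Cells C. \<forall>y\<in>Cells C. src C k x = tgt C k y \<longrightarrow>
        (k < j \<longrightarrow> src C j (comp C k x y) = comp C k (src C j x) (src C j y) \<and>
                    tgt C j (comp C k x y) = comp C k (tgt C j x) (tgt C j y)) \<and>
        (j < k \<longrightarrow> src C j (comp C k x y) = src C j x \<and> tgt C j (comp C k x y) = tgt C j x)) \<and>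
     (\<forall>k<n. \<forall>x\<in>Cells C. comp C k (tgt C k x) x = x \<and> comp C k x (src C k x) = x) \<and>
     (\<forall>k<n. \<forall>x\<in>Cells C. \<forall>y\<in>Cells C. \<forall>z\<in>Cells C.
        src C k x = tgt C k y \<longrightarrow> src C k y = tgt C k z \<longrightarrow>
        comp C k (comp C k x y) z = comp C k x (comp C k y z)) \<and>
     (\<forall>j<n. \<forall>k<n. \<forall>x\<in>Cells C. \<forall>y\<in>Cells C. \<forall>z\<in>Cells C. \<forall>w\<in>Cells C.
        j < k \<longrightarrow> src C k x = tgt C k y \<longrightarrow> src C k z = tgt C k w \<longrightarrow> src C j x = tgt C j z \<longrightarrow>
        comp C j (comp C k x y) (comp C k z w) = comp C k (comp C j x z) (comp C j y w))"

text \<open>x is an m-morphism (a cell of dimension at most m); every cell is an n-morphism.\<close>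
definition is_morphism :: "nat \<Rightarrow> 'a ncat \<Rightarrow> nat \<Rightarrow> 'a \<Rightarrow> bool" where
  "is_morphism n C m x \<longleftrightarrow> x \<in> Cells C \<and> (n \<le> m \<or> src C m x = x)"

definition invertible_morphism :: "nat \<Rightarrow> 'a ncat \<Rightarrow> nat \<Rightarrow> 'a \<Rightarrow> bool" where
  "invertible_morphism n C k x \<longleftrightarrow> is_morphism n C (Suc k) x \<and>
     (\<exists>y. is_morphism n C (Suc k) y \<and> src C k y = tgt C k x \<and> tgt C k y = src C k x \<and>
          comp C k y x = src C k x \<and> comp C k x y = tgt C k x)"

definition gaunt :: "nat \<Rightarrow> 'a ncat \<Rightarrow> bool" where
  "gaunt n C \<longleftrightarrow> strict_ncat n C \<and>
     (\<forall>k<n. \<forall>x. invertible_morphism n C k x \<longrightarrow> x = src C k x)"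

definition strict_functor :: "nat \<Rightarrow> 'a ncat \<Rightarrow> 'a ncat \<Rightarrow> ('a \<Rightarrow> 'a) \<Rightarrow> bool" where
  "strict_functor n C D F \<longleftrightarrow>
     (\<forall>x\<in>Cells C. F x \<in> Cells D) \<and>
     (\<forall>k<n. \<forall>x\<in>Cells C. F (src C k x) = src D k (F x) \<and> F (tgt C k x) = tgt D k (F x)) \<and>
     (\<forall>k<n. \<forall>x\<in>Cells C. \<forall>y\<in>Cells C. src C k x = tgt C k y \<longrightarrow>
        F (comp C k x y) = comp D k (F x) (F y))"

text \<open>A natural endo-transformation of the identity functor of Gaunt_n (objects: gaunt
  n-categories whose cells lie in the universe type 'a).\<close>
definition nat_endo_id :: "nat \<Rightarrow> ('a ncat \<Rightarrow> 'a \<Rightarrow> 'a) \<Rightarrow> bool" where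
  "nat_endo_id n \<eta> \<longleftrightarrow>
     (\<forall>X. gaunt n X \<longrightarrow> strict_functor n X X (\<eta> X)) \<and>
     (\<forall>X Y F. gaunt n X \<longrightarrow> gaunt n Y \<longrightarrow> strict_functor n X Y F \<longrightarrow>
        (\<forall>x\<in>Cells X. F (\<eta> X x) = \<eta> Y (F x)))"

end

theory Submission
  imports Defs "HOL-Library.Countable"
begin

text \<open>The M-globe, the gaunt n-category freely generated by one M-cell, represents M-cells:
  each M-cell x of X is the image of the generator under a strict functor out of the globe,
  so by naturality \<open>\<eta>\<close> fixes x once it fixes the generator. That \<open>\<eta>\<close> fixes the generator
  of the M-globe follows by induction on M: the two boundary (M-1)-cells are fixed by the
  induction hypothesis, and the generator is the only cell of the M-globe with these two
  distinct boundaries.\<close>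

lemma strict_ncat_boundary_closed:
  assumes "strict_ncat n C" "k < n" "x \<in> Cells C"
  shows "src C k x \<in> Cells C" "tgt C k x \<in> Cells C"
  using assms unfolding strict_ncat_def by simp_all

lemma strict_ncat_boundary_of_higher_boundary:
  assumes "strict_ncat n C" "k < j" "j < n" "x \<in> Cells C"
  shows "src C k (src C j x) = src C k x" "src C k (tgt C j x) = src C k x"
    and "tgt C k (src C j x) = tgt C k x" "tgt C k (tgt C j x) = tgt C k x"
  using assms unfolding strict_ncat_def by (meson order.strict_trans)+

lemma strict_ncat_boundary_of_lower_boundary:
  assumes "strict_ncat n C" "j \<le> k" "k < n" "x \<in> Cells C"
  shows "src C k (src C j x) = src C j x" "src C k (tgt C j x) = tgt C j x"
    and "tgt C k (src C j x) = src C j x" "tgt C k (tgt C j x) = tgt C j x"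
  using assms unfolding strict_ncat_def by (meson order.strict_trans1)+

lemma strict_ncat_comp_identity:
  assumes "strict_ncat n C" "k < n" "x \<in> Cells C"
  shows "comp C k (tgt C k x) x = x" "comp C k x (src C k x) = x"
  using assms unfolding strict_ncat_def by simp_all

lemma is_morphism_fixed_by_higher_boundaries:
  assumes "strict_ncat n C" "is_morphism n C M x" "M \<le> k" "k < n"
  shows "src C k x = x" "tgt C k x = x"
  using assms strict_ncat_boundary_of_lower_boundary[OF assms(1,3,4)]
  unfolding is_morphism_def by (metis not_le order.strict_trans2)+

lemma strict_functorD:
  assumes "strict_functor n C D F"
  shows "x \<in> Cells C \<Longrightarrow> F x \<in> Cells D"
    and "k < n \<Longrightarrow> x \<in> Cells C \<Longrightarrow> F (src C k x) = src D k (F x)"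
    and "k < n \<Longrightarrow> x \<in> Cells C \<Longrightarrow> F (tgt C k x) = tgt D k (F x)"
  using assms unfolding strict_functor_def by blast+

lemma nat_endo_idD:
  assumes "nat_endo_id n \<eta>" "gaunt n X"
  shows "strict_functor n X X (\<eta> X)"
    and "gaunt n Y \<Longrightarrow> strict_functor n X Y F \<Longrightarrow> x \<in> Cells X \<Longrightarrow> F (\<eta> X x) = \<eta> Y (F x)"
  using assms unfolding nat_endo_id_def by blast+

lemma gaunt_strict_ncat: "gaunt n C \<Longrightarrow> strict_ncat n C"
  unfolding gaunt_def by blast

lemma infinite_UNIV_inj_from_nat_bool:
  assumes "infinite (UNIV :: 'a set)"
  obtains g :: "nat \<times> bool \<Rightarrow> 'a" where "inj g"
proof -
  obtain f :: "nat \<Rightarrow> 'a" where "inj f"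
    using infinite_countable_subset[OF assms] by blast
  then have "inj (f \<circ> to_nat)"
    by (simp add: inj_compose)
  then show thesis by (rule that)
qed

text \<open>The infinitude of the universe \<open>'a\<close> is used only to label the cells of the M-globe
  injectively: \<open>g (d, False)\<close> and \<open>g (d, True)\<close> are the d-dimensional source and target cells
  for \<open>d < M\<close>, and \<open>g (M, False)\<close> is the generator. In a k-composable pair of cells of a
  globe one factor is an identity k-cell, so composition returns the other factor.\<close>

definition globe :: "(nat \<times> bool \<Rightarrow> 'a) \<Rightarrow> nat \<Rightarrow> 'a ncat" where
  "globe g M = \<lparr>Cells = g ` {p. fst p < M \<or> (fst p = M \<and> \<not> snd p)},
     src = (\<lambda>k a. if k < fst (inv g a) then g (k, False) else a),
     tgt = (\<lambda>k a. if k < fst (inv g a) then g (k, True) else a),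
     comp = (\<lambda>k a b. if fst (inv g a) \<le> k then b else a)\<rparr>"

definition globe_to :: "(nat \<times> bool \<Rightarrow> 'a) \<Rightarrow> nat \<Rightarrow> 'a ncat \<Rightarrow> 'a \<Rightarrow> 'a \<Rightarrow> 'a" where
  "globe_to g M X x a = (if fst (inv g a) = M then x
     else if snd (inv g a) then tgt X (fst (inv g a)) x else src X (fst (inv g a)) x)"

context
  fixes g :: "nat \<times> bool \<Rightarrow> 'a"
  assumes g: "inj g"
begin

lemma globe_simps [simp]:
  "g (d, b) \<in> Cells (globe g M) \<longleftrightarrow> d < M \<or> (d = M \<and> \<not> b)"
  "src (globe g M) k (g (d, b)) = (if k < d then g (k, False) else g (d, b))"
  "tgt (globe g M) k (g (d, b)) = (if k < d then g (k, True) else g (d, b))"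
  "comp (globe g M) k (g (d, b)) c = (if d \<le> k then c else g (d, b))"
  "globe_to g M X x (g (d, b)) = (if d = M then x else if b then tgt X d x else src X d x)"
  using g by (auto simp: globe_def globe_to_def inv_f_f inj_eq)

lemma globe_cellE:
  assumes "a \<in> Cells (globe g M)"
  obtains d b where "a = g (d, b)" "d < M \<or> (d = M \<and> \<not> b)"
  using assms by (auto simp: globe_def)

lemma globe_gaunt: "gaunt n (globe g M)"
  using g unfolding gaunt_def strict_ncat_def invertible_morphism_def is_morphism_def globe_def
  by (auto simp: inv_f_f inj_eq split: if_splits)

lemma globe_generator_unique:
  assumes "c \<in> Cells (globe g (Suc m))"
    and "src (globe g (Suc m)) m c = g (m, False)" "tgt (globe g (Suc m)) m c = g (m, True)"
  shows "c = g (Suc m, False)"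
  using assms(1)
proof (cases rule: globe_cellE)
  case (1 d b)
  then show ?thesis
    using assms(2,3) by (auto simp: inj_eq[OF g] split: if_splits)
qed

context
  fixes n M :: nat and X :: "'a ncat" and x :: 'a
  assumes X: "strict_ncat n X" and x: "is_morphism n X M x" and M: "M \<le> n"
begin

lemma globe_to_cells: "a \<in> Cells (globe g M) \<Longrightarrow> globe_to g M X x a \<in> Cells X"
  using x M strict_ncat_boundary_closed[OF X]
  by (elim globe_cellE) (auto simp: is_morphism_def)

lemma globe_to_boundaries:
  assumes k: "k < n" and a: "a \<in> Cells (globe g M)"
  shows "globe_to g M X x (src (globe g M) k a) = src X k (globe_to g M X x a) \<and>
    globe_to g M X x (tgt (globe g M) k a) = tgt X k (globe_to g M X x a)"
proof -
  have x': "x \<in> Cells X" using x by (simp add: is_morphism_def)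
  from a obtain d b where a: "a = g (d, b)" and db: "d < M \<or> (d = M \<and> \<not> b)"
    by (rule globe_cellE)
  show ?thesis
  proof (cases "k < d")
    case True
    then show ?thesis
      using db M strict_ncat_boundary_of_higher_boundary[OF X True _ x'] by (auto simp: a)
  next
    case False
    then have "d \<le> k" by simp
    then show ?thesis
      using db is_morphism_fixed_by_higher_boundaries[OF X x _ k] strict_ncat_boundary_of_lower_boundary[OF X _ k x']
      by (auto simp: a)
  qed
qed

lemma globe_to_functor: "strict_functor n (globe g M) X (globe_to g M X x)"
  unfolding strict_functor_def
proof (intro conjI allI impI ballI)
  fix k a b
  assume k: "k < n" and a: "a \<in> Cells (globe g M)" and b: "b \<in> Cells (globe g M)"
    and ab: "src (globe g M) k a = tgt (globe g M) k b"
  obtain d c where a': "a = g (d, c)" using a by (rule globe_cellE)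
  obtain d' c' where b': "b = g (d', c')" using b by (rule globe_cellE)
  show "globe_to g M X x (comp (globe g M) k a b) = comp X k (globe_to g M X x a) (globe_to g M X x b)"
  proof (cases "d \<le> k")
    case True
    then have "globe_to g M X x a = tgt X k (globe_to g M X x b)"
      using ab globe_to_boundaries[OF k] a b by (metis a' globe_simps(2) not_le)
    then show ?thesis
      using True strict_ncat_comp_identity[OF X k globe_to_cells[OF b]] by (simp add: a')
  next
    case False
    then have "d' \<le> k"
      using ab by (auto simp: a' b' inj_eq[OF g] split: if_splits)
    then have "globe_to g M X x b = src X k (globe_to g M X x a)"
      using ab globe_to_boundaries[OF k] a b by (metis b' globe_simps(3) not_le)
    then show ?thesis
      using False strict_ncat_comp_identity[OF X k globe_to_cells[OF a]] by (simp add: a')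
  qed
qed (use globe_to_cells globe_to_boundaries in auto)

end

lemma nat_endo_id_determined_by_globe:
  fixes X :: "'a ncat"
  assumes \<eta>: "nat_endo_id n \<eta>" and X: "gaunt n X" and x: "is_morphism n X M x" and M: "M \<le> n"
  shows "\<eta> X x = globe_to g M X x (\<eta> (globe g M) (g (M, False)))"
proof -
  have "globe_to g M X x (g (M, False)) = x" by simp
  then show ?thesis
    using nat_endo_idD(2)[OF \<eta> globe_gaunt X globe_to_functor[OF gaunt_strict_ncat[OF X] x M]]
    by simp
qed

lemma nat_endo_id_fixes_globe_generator:
  assumes \<eta>: "nat_endo_id n \<eta>" and M: "M \<le> n"
  shows "\<eta> (globe g M) (g (M, False)) = g (M, False)"
  using M
proof (induction M)
  case 0
  have "\<eta> (globe g 0) (g (0, False)) \<in> Cells (globe g 0)"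
    using strict_functorD(1)[OF nat_endo_idD(1)[OF \<eta> globe_gaunt]] by simp
  then show ?case by (auto elim: globe_cellE)
next
  case (Suc m)
  let ?G = "globe g (Suc m)" and ?e = "g (Suc m, False)"
  have m: "m < n" using Suc.prems by simp
  have fixes_boundary: "\<eta> ?G (g (m, b)) = g (m, b)" for b
  proof -
    have "is_morphism n ?G m (g (m, b))" by (simp add: is_morphism_def)
    then have "\<eta> ?G (g (m, b)) = globe_to g m ?G (g (m, b)) (g (m, False))"
      using Suc.IH m nat_endo_id_determined_by_globe[OF \<eta> globe_gaunt] by simp
    then show ?thesis by simp
  qed
  have \<eta>G: "strict_functor n ?G ?G (\<eta> ?G)"
    by (rule nat_endo_idD(1)[OF \<eta> globe_gaunt])
  have "src ?G m (\<eta> ?G ?e) = g (m, False)" "tgt ?G m (\<eta> ?G ?e) = g (m, True)"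
    using strict_functorD(2,3)[OF \<eta>G m, of ?e] fixes_boundary by simp_all
  then show ?case
    using globe_generator_unique strict_functorD(1)[OF \<eta>G] by simp
qed

end

theorem lemma4p1:
  fixes n :: nat and \<eta> :: "'a ncat \<Rightarrow> 'a \<Rightarrow> 'a"
  assumes "infinite (UNIV :: 'a set)"
    and "nat_endo_id n \<eta>"
  shows "\<forall>X. gaunt n X \<longrightarrow> (\<forall>x\<in>Cells X. \<eta> X x = x)"
proof (intro allI impI ballI)
  fix X :: "'a ncat" and x
  assume X: "gaunt n X" and x: "x \<in> Cells X"
  obtain g :: "nat \<times> bool \<Rightarrow> 'a" where g: "inj g"
    using infinite_UNIV_inj_from_nat_bool[OF assms(1)] .
  have "is_morphism n X n x"
    using x by (simp add: is_morphism_def)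
  then show "\<eta> X x = x"
    using nat_endo_id_determined_by_globe[OF g assms(2) X _ order.refl]
      nat_endo_id_fixes_globe_generator[OF g assms(2) order.refl]
    by (simp add: g)
qed

end
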